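(* Let $(\mathbb{X},\oplus,\otimes,\mathbb{0},\mathbb{1})$ be a linearly ordered, algebraically complete idempotent semifield, and let $\bm{A}_1,\ldots,\bm{A}_m\in\mathbb{X}^{n\times n}$ be reciprocal matrices (i.e. $\bm{A}_i^{-}=\bm{A}_i$) such that $\bm{B}=\bm{A}_1\oplus\cdots\oplus\bm{A}_m$ has no zero entries. Let $\mu$ be the spectral radius of $\bm{B}$ and $\bm{B}_{\mu}=\mu^{-1}\bm{B}$. Consider the problem of minimizing $\max_{1\le i\le m} d(\bm{A}_i,\bm{x}\bm{x}^{-})$ (i.e. $\bigoplus_{i=1}^m d(\bm{A}_i,\bm{x}\bm{x}^{-})$) over all regular vectors $\bm{x}\in\mathbb{X}^n$. Then the minimum value equals $\mu$, and the set of all solutions is $\{\bm{x}=\bm{B}_{\mu}^{\ast}\bm{u}:\bm{u}\in\mathbb{X}^n,\ \bm{u}\ne\bm{0}\}$.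
   Context: An idempotent semifield is a set $\mathbb{X}$ with associative, commutative operations $\oplus$ (addition) and $\otimes$ (multiplication, usually omitted in writing) with neutral elements $\mathbb{0}$ and $\mathbb{1}$, multiplication distributing over addition, idempotent addition ($x\oplus x=x$), and every nonzero $x$ having an inverse $x^{-1}$ with $xx^{-1}=\mathbb{1}$. It is assumed linearly ordered by the order $x\le y \iff x\oplus y=y$, and algebraically complete: $x^p=a$ is solvable for every $a$ and integer $p>0$, so rational powers are defined. Matrix and vector operations use the usual formulas with $\oplus,\otimes$ in place of $+,\times$; $\bm{0}$ is the zero vector; a vector is regular if it has no zero entries. For a nonzero column vector $\bm{x}=(x_i)$, $\bm{x}^{-}$ is the row vector with entries $x_i^{-1}$ if $x_i\ne\mathbb{0}$ and $\mathbb{0}$ otherwise. For a nonzero matrix $\bm{A}=(a_{ij})$, $\bm{A}^{-}=(a^{-}_{ij})$ with $a^{-}_{ij}=a_{ji}^{-1}$ if $a_{ji}\neq\mathbb{0}$ and $\mathbb{0}$ otherwise. The trace is $\mathrm{tr}\,\bm{A}=a_{11}\oplus\cdots\oplus a_{nn}$. The distance between square matrices is $d(\bm{A},\bm{B})=\mathrm{tr}(\bm{B}^{-}\bm{A})\oplus\mathrm{tr}(\bm{A}^{-}\bm{B})$. $\bm{I}$ is the identity matrix, $\bm{A}^0=\bm{I}$, $\bm{A}^p=\bm{A}^{p-1}\bm{A}$. The spectral radius of $\bm{A}$ of order $n$ is $\lambda=\bigoplus_{k=1}^{n}\bigoplus_{1\le i_1,\ldots,i_k\le n}(a_{i_1i_2}a_{i_2i_3}\cdots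 a_{i_ki_1})^{1/k}$. For a square matrix $\bm{M}$ of order $n$, $\bm{M}^{\ast}=\bm{I}\oplus\bm{M}\oplus\cdots\oplus\bm{M}^{n-1}$. *)

theory Defs
  imports Main
begin

text \<open>Addition is the semifield addition (oplus), multiplication is otimes,
  0 and 1 are the neutral elements; the order is the one induced by addition.\<close>

class idem_semifield = comm_semiring_1 + linorder + inverse +
  assumes add_idem: "x + x = x"
  assumes le_iff_add: "x \<le> y \<longleftrightarrow> x + y = y"
  assumes mult_inverse_nz: "x \<noteq> 0 \<Longrightarrow> x * inverse x = 1"
  assumes alg_complete: "0 < p \<Longrightarrow> \<exists>x. x ^ p = a"

text \<open>The (unique) k-th root, giving rational powers a^(1/k).\<close>
definition iroot :: "nat \<Rightarrow> 'a::idem_semifield \<Rightarrow> 'a" where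
  "iroot k a = (THE x. x ^ k = a)"

type_synonym ('a, 'n) mat = "'n \<Rightarrow> 'n \<Rightarrow> 'a"
type_synonym ('a, 'n) vect = "'n \<Rightarrow> 'a"

definition mmult :: "('a::idem_semifield, 'n::finite) mat \<Rightarrow> ('a, 'n) mat \<Rightarrow> ('a, 'n) mat" where
  "mmult A B = (\<lambda>i j. \<Sum>k\<in>UNIV. A i k * B k j)"

definition mvmult :: "('a::idem_semifield, 'n::finite) mat \<Rightarrow> ('a, 'n) vect \<Rightarrow> ('a, 'n) vect" where
  "mvmult A x = (\<lambda>i. \<Sum>k\<in>UNIV. A i k * x k)"

definition madd :: "('a::idem_semifield, 'n::finite) mat \<Rightarrow> ('a, 'n) mat \<Rightarrow> ('a, 'n) mat" where
  "madd A B = (\<lambda>i j. A i j + B i j)"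

definition smult :: "'a::idem_semifield \<Rightarrow> ('a, 'n::finite) mat \<Rightarrow> ('a, 'n) mat" where
  "smult c A = (\<lambda>i j. c * A i j)"

definition idm :: "('a::idem_semifield, 'n::finite) mat" where
  "idm = (\<lambda>i j. if i = j then 1 else 0)"

primrec mpow :: "('a::idem_semifield, 'n::finite) mat \<Rightarrow> nat \<Rightarrow> ('a, 'n) mat" where
  "mpow A 0 = idm"
| "mpow A (Suc p) = mmult (mpow A p) A"

definition trace :: "('a::idem_semifield, 'n::finite) mat \<Rightarrow> 'a" where
  "trace A = (\<Sum>i\<in>UNIV. A i i)"

definition mconj :: "('a::idem_semifield, 'n::finite) mat \<Rightarrow> ('a, 'n) mat" where
  "mconj A = (\<lambda>i j. if A j i = 0 then 0 else inverse (A j i))"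

definition vconj :: "('a::idem_semifield, 'n::finite) vect \<Rightarrow> ('a, 'n) vect" where
  "vconj x = (\<lambda>i. if x i = 0 then 0 else inverse (x i))"

definition outer_conj :: "('a::idem_semifield, 'n::finite) vect \<Rightarrow> ('a, 'n) mat" where
  "outer_conj x = (\<lambda>i j. x i * vconj x j)"

definition dist_mat :: "('a::idem_semifield, 'n::finite) mat \<Rightarrow> ('a, 'n) mat \<Rightarrow> 'a" where
  "dist_mat A B = trace (mmult (mconj B) A) + trace (mmult (mconj A) B)"

definition regular :: "('a::idem_semifield, 'n::finite) vect \<Rightarrow> bool" where
  "regular x \<longleftrightarrow> (\<forall>i. x i \<noteq> 0)"

definition spec_rad :: "('a::idem_semifield, 'n::finite) mat \<Rightarrow> 'a" where
  "spec_rad A = (\<Sum>k\<in>{1..card (UNIV :: 'n set)}. \<Sum>cs\<in>{cs. length cs = k}.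
      iroot k (\<Prod>j<k. A (cs ! j) (cs ! ((j + 1) mod k))))"

definition kstar :: "('a::idem_semifield, 'n::finite) mat \<Rightarrow> ('a, 'n) mat" where
  "kstar M = (\<lambda>i j. \<Sum>p<card (UNIV :: 'n set). mpow M p i j)"

end

theory Submission
  imports Defs
begin

text \<open>For regular x and reciprocal A both traces in d(A, x x^-) equal the form x^- A x,
  so the objective is x^- B x. This form is at most t exactly when B_ij x_j \<le> t x_i for all
  i, j; multiplying these inequalities around a cycle bounds every cycle product by t^k, so
  x^- B x \<ge> \<mu>. For t = \<mu> the condition reads B_\<mu> x \<le> x. All cycles of B_\<mu>
  have weight at most 1, so every walk can be shortened to one of length below n without
  losing weight; hence B_\<mu>^* dominates all powers of B_\<mu>, every B_\<mu>^* u satisfies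
  B_\<mu> x \<le> x, and conversely B_\<mu> x \<le> x forces x = B_\<mu>^* x.\<close>

section \<open>Order and arithmetic in an idempotent semifield\<close>

lemma idem_add_eq_max: "(x::'a::idem_semifield) + y = max x y"
proof (cases "x \<le> y")
  case True
  then show ?thesis using idem_semifield_class.le_iff_add[of x y] by (simp add: max_def)
next
  case False
  then have "y + x = x" using idem_semifield_class.le_iff_add[of y x] by auto
  then show ?thesis using False by (simp add: max_def add.commute)
qed

lemma idem_zero_le: "0 \<le> (x::'a::idem_semifield)"
  using idem_semifield_class.le_iff_add[of 0 x] by simp

lemma idem_le_zero_iff: "(x::'a::idem_semifield) \<le> 0 \<longleftrightarrow> x = 0"
  using idem_zero_le[of x] by auto

lemma idem_add_le_iff: "(x::'a::idem_semifield) + y \<le> t \<longleftrightarrow> x \<le> t \<and> y \<le> t"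
  by (simp add: idem_add_eq_max)

lemma idem_sum_le_iff:
  "finite S \<Longrightarrow> sum f S \<le> (t::'a::idem_semifield) \<longleftrightarrow> (\<forall>s\<in>S. f s \<le> t)"
  by (induction S rule: finite_induct) (auto simp: idem_add_le_iff idem_zero_le)

lemma idem_member_le_sum: "finite S \<Longrightarrow> s \<in> S \<Longrightarrow> (f s::'a::idem_semifield) \<le> sum f S"
  using idem_sum_le_iff[of S f "sum f S"] by auto

lemma idem_sum_mono:
  "finite S \<Longrightarrow> (\<And>s. s \<in> S \<Longrightarrow> f s \<le> g s) \<Longrightarrow> sum f S \<le> (sum g S::'a::idem_semifield)"
  by (simp add: idem_sum_le_iff) (meson idem_member_le_sum order_trans)

lemma idem_sum_nonzero:
  "finite S \<Longrightarrow> s \<in> S \<Longrightarrow> (f s::'a::idem_semifield) \<noteq> 0 \<Longrightarrow> sum f S \<noteq> 0"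
  using idem_member_le_sum[of S s f] idem_le_zero_iff[of "f s"] by auto

lemma idem_sum_attained:
  "finite S \<Longrightarrow> S \<noteq> {} \<Longrightarrow> \<exists>s\<in>S. sum f S = (f s::'a::idem_semifield)"
proof (induction S rule: finite_ne_induct)
  case (insert x F)
  then show ?case by (auto simp: idem_add_eq_max max_def)
qed simp

lemma idem_mult_left_mono: "(x::'a::idem_semifield) \<le> y \<Longrightarrow> c * x \<le> c * y"
  by (metis distrib_left idem_semifield_class.le_iff_add)

lemma idem_mult_right_mono: "(x::'a::idem_semifield) \<le> y \<Longrightarrow> x * c \<le> y * c"
  using idem_mult_left_mono[of x y c] by (simp add: mult.commute)

lemma idem_mult_mono: "(a::'a::idem_semifield) \<le> b \<Longrightarrow> c \<le> d \<Longrightarrow> a * c \<le> b * d"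
  using idem_mult_left_mono[of c d a] idem_mult_right_mono[of a b d] by (rule order_trans)

lemma idem_inverse_mult_self: "(x::'a::idem_semifield) \<noteq> 0 \<Longrightarrow> inverse x * x = 1"
  using idem_semifield_class.mult_inverse_nz by (simp add: mult.commute)

lemma idem_inverse_nonzero: "(x::'a::idem_semifield) \<noteq> 0 \<Longrightarrow> inverse x \<noteq> 0"
  using idem_semifield_class.mult_inverse_nz[of x] by auto

lemma idem_inverse_unique: "(a::'a::idem_semifield) * y = 1 \<Longrightarrow> y = inverse a"
proof -
  assume h: "a * y = 1"
  then have "a \<noteq> 0" by auto
  then have "y = (inverse a * a) * y" by (simp add: idem_inverse_mult_self)
  also have "\<dots> = inverse a" by (simp add: h mult.assoc)
  finally show ?thesis .
qed

lemma idem_mult_nonzero: "(x::'a::idem_semifield) \<noteq> 0 \<Longrightarrow> y \<noteq> 0 \<Longrightarrow> x * y \<noteq> 0"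
proof
  assume x: "x \<noteq> 0" and "y \<noteq> 0" and xy: "x * y = 0"
  have "y = (inverse x * x) * y" using idem_inverse_mult_self[OF x] by simp
  also have "\<dots> = 0" by (simp add: xy mult.assoc)
  finally show False using \<open>y \<noteq> 0\<close> by simp
qed

lemma idem_inverse_mult:
  "(a::'a::idem_semifield) \<noteq> 0 \<Longrightarrow> b \<noteq> 0 \<Longrightarrow> inverse (a * b) = inverse a * inverse b"
  by (rule idem_inverse_unique[symmetric])
    (simp add: idem_semifield_class.mult_inverse_nz idem_inverse_mult_self mult.left_commute mult.assoc)

lemma idem_inverse_inverse: "(a::'a::idem_semifield) \<noteq> 0 \<Longrightarrow> inverse (inverse a) = a"
  using idem_inverse_unique[OF idem_inverse_mult_self] by metis

lemma idem_mult_left_le_cancel: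
  "(c::'a::idem_semifield) \<noteq> 0 \<Longrightarrow> c * x \<le> c * y \<longleftrightarrow> x \<le> y"
proof
  assume c: "c \<noteq> 0" and "c * x \<le> c * y"
  from this(2) have "inverse c * (c * x) \<le> inverse c * (c * y)" by (rule idem_mult_left_mono)
  then show "x \<le> y" by (simp add: mult.assoc[symmetric] idem_inverse_mult_self[OF c])
qed (rule idem_mult_left_mono)

lemma idem_power_nonzero: "(x::'a::idem_semifield) \<noteq> 0 \<Longrightarrow> x ^ k \<noteq> 0"
  by (induction k) (auto simp: idem_mult_nonzero)

lemma idem_power_mono: "(x::'a::idem_semifield) \<le> y \<Longrightarrow> x ^ k \<le> y ^ k"
  by (induction k) (auto simp: idem_mult_mono)

lemma idem_power_strict_mono: "(x::'a::idem_semifield) < y \<Longrightarrow> 0 < k \<Longrightarrow> x ^ k < y ^ k"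
proof (induction k)
  case 0
  then show ?case by simp
next
  case (Suc k)
  show ?case
  proof (cases "x = 0")
    case True
    then show ?thesis
      using Suc.prems idem_power_nonzero[of y "Suc k"] idem_zero_le[of "y ^ Suc k"]
      by (auto simp: order_less_le)
  next
    case False
    have "x ^ k \<noteq> 0" using False by (rule idem_power_nonzero)
    then have "x ^ k * x < x ^ k * y"
      using Suc.prems idem_mult_left_le_cancel[of "x ^ k" y x] by (auto simp: order_less_le)
    also have "\<dots> \<le> y ^ k * y"
      using Suc.prems by (intro idem_mult_right_mono idem_power_mono) simp
    finally show ?thesis by (simp add: mult.commute)
  qed
qed

lemma idem_power_le_power_iff: "0 < k \<Longrightarrow> (x::'a::idem_semifield) ^ k \<le> y ^ k \<longleftrightarrow> x \<le> y"
  using idem_power_strict_mono[of y x k] idem_power_mono[of x y k] by (meson not_le)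

lemma idem_power_inject: "0 < k \<Longrightarrow> (x::'a::idem_semifield) ^ k = y ^ k \<Longrightarrow> x = y"
  by (metis antisym idem_power_le_power_iff order_refl)

lemma idem_prod_mono:
  "(\<And>q. q \<in> S \<Longrightarrow> (f q::'a::idem_semifield) \<le> g q) \<Longrightarrow> prod f S \<le> prod g S"
  by (induction S rule: infinite_finite_induct) (auto simp: idem_mult_mono)

lemma idem_prod_nonzero: "(\<And>q. q \<in> S \<Longrightarrow> (f q::'a::idem_semifield) \<noteq> 0) \<Longrightarrow> prod f S \<noteq> 0"
  by (induction S rule: infinite_finite_induct) (auto simp: idem_mult_nonzero)

lemma iroot_eqI: "0 < k \<Longrightarrow> x ^ k = a \<Longrightarrow> iroot k (a::'a::idem_semifield) = x"
  unfolding iroot_def by (rule the_equality) (auto intro: idem_power_inject)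

lemma iroot_power: "0 < k \<Longrightarrow> iroot k (a::'a::idem_semifield) ^ k = a"
  using idem_semifield_class.alg_complete[of k a] iroot_eqI by metis

lemma iroot_le_iff: "0 < k \<Longrightarrow> iroot k (a::'a::idem_semifield) \<le> t \<longleftrightarrow> a \<le> t ^ k"
  using idem_power_le_power_iff[of k "iroot k a" t] iroot_power[of k a] by simp

lemma iroot_mult_power:
  "0 < k \<Longrightarrow> iroot k (c ^ k * a) = c * iroot k (a::'a::idem_semifield)"
  by (rule iroot_eqI) (simp_all add: power_mult_distrib iroot_power)

section \<open>The objective as a quadratic form\<close>

definition quad_form :: "('a::idem_semifield, 'n::finite) mat \<Rightarrow> ('a, 'n) vect \<Rightarrow> 'a" where
  "quad_form M x = (\<Sum>i\<in>UNIV. \<Sum>j\<in>UNIV. vconj x i * M i j * x j)"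

lemma vconj_regular: "regular x \<Longrightarrow> vconj x i = inverse (x i)"
  by (simp add: regular_def vconj_def)

lemma mconj_outer_conj:
  assumes x: "regular x"
  shows "mconj (outer_conj x) = (\<lambda>i j. x i * inverse (x j))"
proof (intro ext)
  fix i j
  have nz: "x i \<noteq> 0" "x j \<noteq> 0" using x by (auto simp: regular_def)
  then have "x j * inverse (x i) \<noteq> 0" by (simp add: idem_mult_nonzero idem_inverse_nonzero)
  moreover have "inverse (x j * inverse (x i)) = inverse (x j) * x i"
    using nz by (simp add: idem_inverse_mult idem_inverse_nonzero idem_inverse_inverse)
  ultimately show "mconj (outer_conj x) i j = x i * inverse (x j)"
    by (simp add: mconj_def outer_conj_def vconj_regular[OF x] mult.commute)
qed

lemma dist_mat_outer_conj:
  assumes x: "regular x" and recip: "mconj A = A"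
  shows "dist_mat A (outer_conj x) = quad_form A x"
proof -
  have "trace (mmult (mconj (outer_conj x)) A) = (\<Sum>i\<in>UNIV. \<Sum>k\<in>UNIV. x i * inverse (x k) * A k i)"
    by (simp add: trace_def mmult_def mconj_outer_conj[OF x])
  also have "\<dots> = (\<Sum>k\<in>UNIV. \<Sum>i\<in>UNIV. x i * inverse (x k) * A k i)"
    by (rule sum.swap)
  also have "\<dots> = quad_form A x"
    by (simp add: quad_form_def vconj_regular[OF x] ac_simps)
  finally have "trace (mmult (mconj (outer_conj x)) A) = quad_form A x" .
  moreover have "trace (mmult (mconj A) (outer_conj x)) = quad_form A x"
    by (simp add: recip trace_def mmult_def outer_conj_def quad_form_def vconj_regular[OF x] ac_simps)
  ultimately show ?thesis
    unfolding dist_mat_def by (simp add: idem_semifield_class.add_idem)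
qed

lemma quad_form_sum:
  fixes A :: "nat \<Rightarrow> ('a::idem_semifield, 'n::finite) mat"
  shows "(\<Sum>l<m. quad_form (A l) x) = quad_form (\<lambda>i j. \<Sum>l<m. A l i j) x"
proof -
  have "(\<Sum>l<m. quad_form (A l) x) = (\<Sum>i\<in>UNIV. \<Sum>l<m. \<Sum>j\<in>UNIV. vconj x i * A l i j * x j)"
    unfolding quad_form_def by (rule sum.swap)
  also have "\<dots> = (\<Sum>i\<in>UNIV. \<Sum>j\<in>UNIV. \<Sum>l<m. vconj x i * A l i j * x j)"
    by (rule sum.cong[OF refl], rule sum.swap)
  finally show ?thesis
    by (simp add: quad_form_def sum_distrib_left sum_distrib_right)
qed

lemma quad_form_le_iff:
  assumes x: "regular x"
  shows "quad_form M x \<le> t \<longleftrightarrow> (\<forall>i j. M i j * x j \<le> t * x i)"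
proof -
  have "inverse (x i) * M i j * x j \<le> t \<longleftrightarrow> M i j * x j \<le> t * x i" for i j
  proof -
    have nz: "x i \<noteq> 0" using x by (simp add: regular_def)
    then have "x i * (inverse (x i) * M i j * x j) = M i j * x j"
      by (simp add: idem_semifield_class.mult_inverse_nz mult.assoc[symmetric])
    then show ?thesis
      using idem_mult_left_le_cancel[OF nz, of "inverse (x i) * M i j * x j" t]
      by (simp add: mult.commute)
  qed
  then show ?thesis
    unfolding quad_form_def by (simp add: idem_sum_le_iff vconj_regular[OF x])
qed

lemma mvmult_smult_inverse_le_iff:
  assumes t: "t \<noteq> 0"
  shows "mvmult (smult (inverse t) M) x i \<le> x i \<longleftrightarrow> (\<forall>j. M i j * x j \<le> t * x i)"
proof -
  have "inverse t * M i j * x j \<le> x i \<longleftrightarrow> M i j * x j \<le> t * x i" for j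
    using idem_mult_left_le_cancel[OF t, of "inverse t * M i j * x j" "x i"]
    by (simp add: idem_semifield_class.mult_inverse_nz[OF t] mult.assoc[symmetric])
  then show ?thesis
    unfolding mvmult_def smult_def by (simp add: idem_sum_le_iff)
qed

section \<open>Cycle products and the spectral radius\<close>

definition cycle_prod :: "('a::idem_semifield, 'n::finite) mat \<Rightarrow> 'n list \<Rightarrow> 'a" where
  "cycle_prod M cs = (\<Prod>j<length cs. M (cs ! j) (cs ! ((j + 1) mod length cs)))"

lemma spec_rad_eq_cycle_prod:
  "spec_rad M = (\<Sum>k\<in>{1..card (UNIV :: 'n set)}. \<Sum>cs\<in>{cs. length cs = k}.
      iroot k (cycle_prod (M :: ('a::idem_semifield, 'n::finite) mat) cs))"
  unfolding spec_rad_def cycle_prod_def by (intro sum.cong) auto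

lemma spec_rad_le_iff:
  "spec_rad (M :: ('a::idem_semifield, 'n::finite) mat) \<le> t \<longleftrightarrow>
    (\<forall>cs. cs \<noteq> [] \<longrightarrow> length cs \<le> card (UNIV :: 'n set) \<longrightarrow> cycle_prod M cs \<le> t ^ length cs)"
proof -
  have "spec_rad M \<le> t \<longleftrightarrow> (\<forall>k\<in>{1..card (UNIV :: 'n set)}. \<forall>cs\<in>{cs. length cs = k}.
      iroot k (cycle_prod M cs) \<le> t)"
    using finite_lists_length_eq[of "UNIV :: 'n set"]
    unfolding spec_rad_eq_cycle_prod by (simp add: idem_sum_le_iff)
  then show ?thesis
    by (auto simp: iroot_le_iff Suc_le_eq)
qed

lemma cycle_prod_le_spec_rad:
  "cs \<noteq> [] \<Longrightarrow> length cs \<le> card (UNIV :: 'n set) \<Longrightarrow>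
    cycle_prod (M :: ('a::idem_semifield, 'n::finite) mat) cs \<le> spec_rad M ^ length cs"
  using spec_rad_le_iff[of M "spec_rad M"] by blast

lemma diag_le_spec_rad: "(M :: ('a::idem_semifield, 'n::finite) mat) i i \<le> spec_rad M"
  using cycle_prod_le_spec_rad[of "[i]" M] by (simp add: cycle_prod_def Suc_le_eq card_gt_0_iff)

lemma spec_rad_smult: "spec_rad (smult c M) = c * spec_rad (M :: ('a::idem_semifield, 'n::finite) mat)"
proof -
  have "iroot k (cycle_prod (smult c M) cs) = c * iroot k (cycle_prod M cs)"
    if "length cs = k" "k \<in> {1..card (UNIV :: 'n set)}" for k cs
    using that iroot_mult_power[of k c]
    by (simp add: cycle_prod_def smult_def prod.distrib)
  then show ?thesis
    unfolding spec_rad_eq_cycle_prod sum_distrib_left by (intro sum.cong) auto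
qed

lemma prod_lessThan_rotate:
  "0 < (k::nat) \<Longrightarrow> (\<Prod>q<k. g ((q + 1) mod k)) = (\<Prod>q<k. (g q :: 'a::comm_monoid_mult))"
proof -
  assume "0 < k"
  then obtain k' where k: "k = Suc k'" by (cases k) auto
  have "(\<Prod>q<Suc k'. g ((q + 1) mod Suc k')) = (\<Prod>q<k'. g ((q + 1) mod Suc k')) * g 0"
    by (simp add: prod.lessThan_Suc)
  also have "(\<Prod>q<k'. g ((q + 1) mod Suc k')) = (\<Prod>q<k'. g (Suc q))"
    by (rule prod.cong) auto
  also have "(\<Prod>q<k'. g (Suc q)) * g 0 = (\<Prod>q<Suc k'. g q)"
    using prod.lessThan_Suc_shift[of g k'] by (simp add: mult.commute)
  finally show ?thesis using k by simp
qed

lemma cycle_prod_le_power: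
  fixes M :: "('a::idem_semifield, 'n::finite) mat"
  assumes x: "regular x" and sub: "\<And>i j. M i j * x j \<le> t * x i" and cs: "cs \<noteq> []"
  shows "cycle_prod M cs \<le> t ^ length cs"
proof -
  define k where "k = length cs"
  have k: "0 < k" using cs by (simp add: k_def)
  define X where "X = (\<Prod>q<k. x (cs ! q))"
  have X: "X \<noteq> 0" unfolding X_def using x by (intro idem_prod_nonzero) (simp add: regular_def)
  have "cycle_prod M cs * X = (\<Prod>q<k. M (cs ! q) (cs ! ((q + 1) mod k)) * x (cs ! ((q + 1) mod k)))"
    unfolding X_def prod_lessThan_rotate[OF k, of "\<lambda>q. x (cs ! q)", symmetric]
    by (simp add: cycle_prod_def k_def prod.distrib)
  also have "\<dots> \<le> (\<Prod>q<k. t * x (cs ! q))"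
    by (rule idem_prod_mono) (rule sub)
  also have "\<dots> = t ^ k * X"
    by (simp add: X_def prod.distrib)
  finally show ?thesis
    using idem_mult_left_le_cancel[OF X] by (simp add: mult.commute k_def)
qed

lemma spec_rad_le_quad_form: "regular x \<Longrightarrow> spec_rad M \<le> quad_form M x"
  using quad_form_le_iff[of x M "quad_form M x"] cycle_prod_le_power[of x M]
  by (auto simp: spec_rad_le_iff)

section \<open>Walks and the Kleene star\<close>

definition walk_weight ::
  "('a::idem_semifield, 'n::finite) mat \<Rightarrow> (nat \<Rightarrow> 'n) \<Rightarrow> nat \<Rightarrow> nat \<Rightarrow> 'a" where
  "walk_weight M w a b = (\<Prod>q\<in>{a..<b}. M (w q) (w (Suc q)))"

lemma walk_weight_split:
  "a \<le> b \<Longrightarrow> b \<le> c \<Longrightarrow> walk_weight M w a c = walk_weight M w a b * walk_weight M w b c"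
  unfolding walk_weight_def by (simp add: prod.atLeastLessThan_concat)

lemma walk_weight_le_mpow: "walk_weight M w 0 p \<le> mpow M p (w 0) (w p)"
proof (induction p)
  case 0
  then show ?case by (simp add: walk_weight_def idm_def)
next
  case (Suc p)
  have "walk_weight M w 0 (Suc p) = walk_weight M w 0 p * M (w p) (w (Suc p))"
    by (simp add: walk_weight_def)
  also have "\<dots> \<le> mpow M p (w 0) (w p) * M (w p) (w (Suc p))"
    using Suc.IH by (rule idem_mult_right_mono)
  also have "\<dots> \<le> mpow M (Suc p) (w 0) (w (Suc p))"
    unfolding mpow.simps mmult_def by (rule idem_member_le_sum) auto
  finally show ?case .
qed

lemma mpow_eq_walk_weight:
  "mpow M p i j = 0 \<or> (\<exists>w. w 0 = i \<and> w p = j \<and> mpow M p i j = walk_weight M w 0 p)"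
proof (induction p arbitrary: j)
  case 0
  show ?case
    by (cases "i = j") (auto simp: idm_def walk_weight_def intro!: exI[of _ "\<lambda>_. i"])
next
  case (Suc p)
  obtain k where k: "mpow M (Suc p) i j = mpow M p i k * M k j"
    using idem_sum_attained[of UNIV "\<lambda>k. mpow M p i k * M k j"] by (auto simp: mmult_def)
  from Suc.IH[of k] show ?case
  proof
    assume "\<exists>w. w 0 = i \<and> w p = k \<and> mpow M p i k = walk_weight M w 0 p"
    then obtain w where w: "w 0 = i" "w p = k" "mpow M p i k = walk_weight M w 0 p" by blast
    have "walk_weight M (w(Suc p := j)) 0 p = walk_weight M w 0 p"
      unfolding walk_weight_def by (rule prod.cong) auto
    then have "mpow M (Suc p) i j = walk_weight M (w(Suc p := j)) 0 (Suc p)"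
      using k w by (simp add: walk_weight_def)
    moreover have "(w(Suc p := j)) 0 = i" "(w(Suc p := j)) (Suc p) = j"
      using w by simp_all
    ultimately show ?thesis by blast
  qed (use k in \<open>simp del: mpow.simps\<close>)
qed

lemma closed_walk_weight_eq_cycle_prod:
  assumes closed: "w a = w (a + k)" and k: "0 < k"
  shows "walk_weight M w a (a + k) = cycle_prod M (map (\<lambda>q. w (a + q)) [0..<k])"
proof -
  define cs where "cs = map (\<lambda>q. w (a + q)) [0..<k]"
  have "walk_weight M w a (a + k) = (\<Prod>q<k. M (w (a + q)) (w (a + Suc q)))"
    unfolding walk_weight_def lessThan_atLeast0
    using prod.shift_bounds_nat_ivl[of "\<lambda>q. M (w q) (w (Suc q))" 0 a k] by (simp add: add.commute)
  also have "\<dots> = (\<Prod>q<k. M (cs ! q) (cs ! ((q + 1) mod k)))"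
  proof (rule prod.cong)
    fix q assume "q \<in> {..<k}"
    then show "M (w (a + q)) (w (a + Suc q)) = M (cs ! q) (cs ! ((q + 1) mod k))"
      using closed by (cases "Suc q = k") (auto simp: cs_def)
  qed simp
  finally show ?thesis by (simp add: cycle_prod_def cs_def)
qed

lemma closed_walk_weight_le_one:
  fixes M :: "('a::idem_semifield, 'n::finite) mat"
  assumes M: "spec_rad M \<le> 1" and closed: "w a = w (a + k)"
    and k: "0 < k" "k \<le> card (UNIV :: 'n set)"
  shows "walk_weight M w a (a + k) \<le> 1"
proof -
  have "walk_weight M w a (a + k) \<le> spec_rad M ^ k"
    unfolding closed_walk_weight_eq_cycle_prod[OF closed k(1)]
    using cycle_prod_le_spec_rad[of "map (\<lambda>q. w (a + q)) [0..<k]" M] k by simp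
  also have "\<dots> \<le> 1"
    using idem_power_mono[OF M, of k] by simp
  finally show ?thesis .
qed

lemma walk_revisits:
  fixes w :: "nat \<Rightarrow> 'n::finite"
  obtains a b where "a < b" "b \<le> card (UNIV :: 'n set)" "w a = w b"
proof -
  let ?N = "card (UNIV :: 'n set)"
  have "\<not> inj_on w {0..?N}"
  proof
    assume "inj_on w {0..?N}"
    then have "card (w ` {0..?N}) = Suc ?N" by (simp add: card_image)
    moreover have "card (w ` {0..?N}) \<le> ?N" by (rule card_mono) auto
    ultimately show False by simp
  qed
  then obtain a b where "a \<le> ?N" "b \<le> ?N" "a \<noteq> b" "w a = w b"
    unfolding inj_on_def by auto
  then show ?thesis
    using that[of a b] that[of b a] by (cases "a < b") auto
qed

lemma walk_weight_shortcut:
  assumes closed: "w a = w (a + k)" and a: "a \<le> p"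
  shows "walk_weight M w 0 (p + k) =
    walk_weight M (\<lambda>q. if q < a then w q else w (q + k)) 0 p * walk_weight M w a (a + k)"
proof -
  define w' where "w' = (\<lambda>q. if q < a then w q else w (q + k))"
  have "walk_weight M w 0 (p + k) =
      walk_weight M w 0 a * walk_weight M w a (a + k) * walk_weight M w (a + k) (p + k)"
    using a walk_weight_split[of 0 a "p + k" M w] walk_weight_split[of a "a + k" "p + k" M w]
    by (simp add: mult.assoc)
  also have "walk_weight M w 0 a = walk_weight M w' 0 a"
    unfolding walk_weight_def w'_def
    using closed by (intro prod.cong) (auto dest: Suc_lessI)
  also have "walk_weight M w (a + k) (p + k) = (\<Prod>q\<in>{a..<p}. M (w (q + k)) (w (Suc (q + k))))"
    unfolding walk_weight_def by (rule prod.shift_bounds_nat_ivl)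
  also have "\<dots> = walk_weight M w' a p"
    unfolding walk_weight_def w'_def by (intro prod.cong) auto
  also have "walk_weight M w' 0 a * walk_weight M w a (a + k) * walk_weight M w' a p =
      walk_weight M w' 0 p * walk_weight M w a (a + k)"
    using a walk_weight_split[of 0 a p M w'] by (simp add: ac_simps)
  finally show ?thesis by (simp add: w'_def)
qed

lemma walk_weight_le_kstar:
  fixes M :: "('a::idem_semifield, 'n::finite) mat"
  assumes M: "spec_rad M \<le> 1"
  shows "walk_weight M w 0 p \<le> kstar M (w 0) (w p)"
proof (induction p arbitrary: w rule: less_induct)
  case (less p)
  show ?case
  proof (cases "p < card (UNIV :: 'n set)")
    case True
    have "walk_weight M w 0 p \<le> mpow M p (w 0) (w p)" by (rule walk_weight_le_mpow)
    also have "\<dots> \<le> kstar M (w 0) (w p)"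
      unfolding kstar_def using True by (intro idem_member_le_sum) auto
    finally show ?thesis .
  next
    case False
    obtain a b where ab: "a < b" "b \<le> card (UNIV :: 'n set)" "w a = w b"
      by (rule walk_revisits)
    define k where "k = b - a"
    define w' where "w' = (\<lambda>q. if q < a then w q else w (q + k))"
    have closed: "w a = w (a + k)" and k: "0 < k" "k \<le> card (UNIV :: 'n set)"
      using ab by (auto simp: k_def)
    have a: "a \<le> p - k" and p: "p = (p - k) + k"
      using ab False by (auto simp: k_def)
    have "walk_weight M w 0 p = walk_weight M w' 0 (p - k) * walk_weight M w a (a + k)"
      using walk_weight_shortcut[OF closed a, of M] p by (simp add: w'_def)
    also have "\<dots> \<le> walk_weight M w' 0 (p - k) * 1"
      by (rule idem_mult_left_mono, rule closed_walk_weight_le_one[OF M closed k])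
    also have "\<dots> \<le> kstar M (w' 0) (w' (p - k))"
      using less.IH[of "p - k" w'] k False by simp
    also have "w' 0 = w 0"
      using closed by (cases "a = 0") (simp_all add: w'_def)
    also have "w' (p - k) = w p"
      using a p by (simp add: w'_def)
    finally show ?thesis .
  qed
qed

lemma mpow_le_kstar: "spec_rad M \<le> 1 \<Longrightarrow> mpow M p i j \<le> kstar M i j"
  using mpow_eq_walk_weight[of M p i j] walk_weight_le_kstar[of M]
  by (auto simp: idem_zero_le)

lemma mpow_one: "mpow M 1 = M"
  by (simp add: mmult_def idm_def fun_eq_iff if_distrib[of "\<lambda>c. c * _"] cong: if_cong)

lemma le_kstar: "spec_rad M \<le> 1 \<Longrightarrow> M i j \<le> kstar M i j"
  using mpow_le_kstar[of M 1 i j, unfolded mpow_one] .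

lemma one_le_kstar_diag: "1 \<le> kstar (M::('a::idem_semifield, 'n::finite) mat) i i"
  using idem_member_le_sum[of "{..<card (UNIV :: 'n set)}" 0 "\<lambda>p. mpow M p i i"]
  by (simp add: kstar_def idm_def card_gt_0_iff)

lemma mult_mpow_le_mpow_Suc: "M i l * mpow M p l k \<le> mpow M (Suc p) i k"
proof (induction p arbitrary: k)
  case 0
  have "M i l * mpow M 0 l k \<le> M i k" by (simp add: idm_def idem_zero_le)
  also have "\<dots> = mpow M (Suc 0) i k" by (simp only: One_nat_def[symmetric] mpow_one)
  finally show ?case .
next
  case (Suc p)
  have "M i l * mpow M (Suc p) l k = (\<Sum>r\<in>UNIV. (M i l * mpow M p l r) * M r k)"
    by (simp add: mmult_def sum_distrib_left mult.assoc)
  also have "\<dots> \<le> (\<Sum>r\<in>UNIV. mpow M (Suc p) i r * M r k)"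
    by (rule idem_sum_mono[OF finite_UNIV], rule idem_mult_right_mono, rule Suc.IH)
  finally show ?case by (simp add: mmult_def)
qed

lemma mvmult_kstar_le:
  assumes M: "spec_rad M \<le> 1"
  shows "mvmult M (mvmult (kstar M) u) i \<le> mvmult (kstar M) u i"
proof -
  let ?x = "mvmult (kstar M) u"
  have "M i l * mpow M p l k * u k \<le> ?x i" for l k p
  proof -
    have "M i l * mpow M p l k * u k \<le> kstar M i k * u k"
      by (rule idem_mult_right_mono, rule order_trans[OF mult_mpow_le_mpow_Suc mpow_le_kstar[OF M]])
    also have "\<dots> \<le> ?x i"
      unfolding mvmult_def by (rule idem_member_le_sum) auto
    finally show ?thesis .
  qed
  then show ?thesis
    by (simp add: mvmult_def kstar_def sum_distrib_left sum_distrib_right mult.assoc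
        idem_sum_le_iff)
qed

lemma kstar_mvmult_regular:
  assumes M: "spec_rad M \<le> 1" and M_pos: "\<And>i j. M i j \<noteq> 0" and u: "u \<noteq> (\<lambda>_. 0)"
  shows "regular (mvmult (kstar M) u)"
proof -
  obtain k where k: "u k \<noteq> 0" using u by auto
  have "kstar M i k \<noteq> 0" for i
    using le_kstar[OF M, of i k] M_pos[of i k] idem_le_zero_iff by (metis order_trans)
  then show ?thesis
    unfolding regular_def mvmult_def
    by (intro allI idem_sum_nonzero[of UNIV k]) (auto simp: idem_mult_nonzero k)
qed

lemma mpow_mvmult_le:
  assumes sub: "\<And>i. mvmult M x i \<le> x i"
  shows "mpow M p i k * x k \<le> x i"
proof (induction p arbitrary: k)
  case 0
  then show ?case by (simp add: idm_def idem_zero_le)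
next
  case (Suc p)
  have "mpow M p i l * (M l k * x k) \<le> x i" for l
  proof -
    have "M l k * x k \<le> mvmult M x l"
      unfolding mvmult_def by (rule idem_member_le_sum) auto
    then have "mpow M p i l * (M l k * x k) \<le> mpow M p i l * x l"
      using sub order_trans idem_mult_left_mono by metis
    also have "\<dots> \<le> x i" by (rule Suc.IH)
    finally show ?thesis .
  qed
  then show ?case
    by (simp add: mmult_def sum_distrib_right mult.assoc idem_sum_le_iff)
qed

lemma kstar_mvmult_eq:
  assumes sub: "\<And>i. mvmult M x i \<le> x i"
  shows "mvmult (kstar M) x = x"
proof (rule ext, rule antisym)
  fix i
  show "mvmult (kstar M) x i \<le> x i"
    unfolding mvmult_def kstar_def
    by (simp add: idem_sum_le_iff sum_distrib_right mpow_mvmult_le[OF sub])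
  have "x i \<le> kstar M i i * x i"
    using idem_mult_right_mono[OF one_le_kstar_diag] by simp
  also have "\<dots> \<le> mvmult (kstar M) x i"
    unfolding mvmult_def by (rule idem_member_le_sum) auto
  finally show "x i \<le> mvmult (kstar M) x i" .
qed

theorem corollary2:
  fixes A :: "nat \<Rightarrow> ('a::idem_semifield, 'n::finite) mat" and m :: nat
  defines "B \<equiv> (\<lambda>i j. \<Sum>l<m. A l i j)"
  defines "\<mu> \<equiv> spec_rad B"
  defines "F \<equiv> (\<lambda>x. \<Sum>l<m. dist_mat (A l) (outer_conj x))"
  assumes recip: "\<And>l. l < m \<Longrightarrow> mconj (A l) = A l"
    and B_pos: "\<And>i j. B i j \<noteq> 0"
  shows "(\<forall>x. regular x \<longrightarrow> \<mu> \<le> F x)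
    \<and> (\<exists>x. regular x \<and> F x = \<mu>)
    \<and> {x. regular x \<and> F x = \<mu>} =
        {mvmult (kstar (smult (inverse \<mu>) B)) u | u. u \<noteq> (\<lambda>_. 0)}"
proof -
  have \<mu>: "\<mu> \<noteq> 0"
    using diag_le_spec_rad[of B undefined] B_pos idem_le_zero_iff by (force simp: \<mu>_def)
  define C where "C = smult (inverse \<mu>) B"
  have C_spec: "spec_rad C \<le> 1"
    using idem_inverse_mult_self[OF \<mu>] by (simp add: C_def spec_rad_smult \<mu>_def)
  have C_pos: "C i j \<noteq> 0" for i j
    using B_pos \<mu> by (simp add: C_def smult_def idem_mult_nonzero idem_inverse_nonzero)
  have F_eq: "F x = quad_form B x" if x: "regular x" for x
    using quad_form_sum[where A = A and m = m and x = x] dist_mat_outer_conj[OF x recip] by (simp add: F_def B_def)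
  have lower: "\<mu> \<le> F x" if "regular x" for x
    using spec_rad_le_quad_form[OF that, of B] F_eq[OF that] by (simp add: \<mu>_def)
  have optimal_iff: "F x = \<mu> \<longleftrightarrow> (\<forall>i. mvmult C x i \<le> x i)" if x: "regular x" for x
    using lower[OF x] quad_form_le_iff[OF x, of B \<mu>]
    by (auto simp: F_eq[OF x] C_def mvmult_smult_inverse_le_iff[OF \<mu>])
  have solutions: "{x. regular x \<and> F x = \<mu>} = {mvmult (kstar C) u | u. u \<noteq> (\<lambda>_. 0)}"
  proof (intro set_eqI iffI)
    fix x assume "x \<in> {x. regular x \<and> F x = \<mu>}"
    then have x: "regular x" "F x = \<mu>" by auto
    then have "mvmult (kstar C) x = x"
      using optimal_iff[OF x(1)] kstar_mvmult_eq[of C x] by simp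
    with x(1) show "x \<in> {mvmult (kstar C) u | u. u \<noteq> (\<lambda>_. 0)}"
      by (auto simp: regular_def fun_eq_iff intro!: exI[of _ x])
  next
    fix x assume "x \<in> {mvmult (kstar C) u | u. u \<noteq> (\<lambda>_. 0)}"
    then obtain u where "u \<noteq> (\<lambda>_. 0)" and x: "x = mvmult (kstar C) u" by blast
    then show "x \<in> {x. regular x \<and> F x = \<mu>}"
      using kstar_mvmult_regular[OF C_spec C_pos] mvmult_kstar_le[OF C_spec] optimal_iff by auto
  qed
  moreover have "mvmult (kstar C) (\<lambda>_. 1) \<in> {mvmult (kstar C) u | u. u \<noteq> (\<lambda>_. 0)}"
    by (auto simp: fun_eq_iff)
  ultimately show ?thesis
    using lower by (auto simp: C_def)
qed

end
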